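(* Let $f=\{f_n\}$ be a one-way permutation family (against non-uniform PPT inverters), $X$ uniform on $\{0,1\}^n$, $Y=f(X)$. For each $n$ let $P=P^{(n)}$ be a probabilistic generative model supporting two factorizations, $P_{1\to2}(x,y)=P_1(x)P_2(y;x)$ and $P_{2\to1}(x,y)=P_2(y)P_1(x;y)$, where $P_1(\cdot)$, $P_2(\cdot)$, $P_1(\cdot\,;y)$ (for each $y$) and $P_2(\cdot\,;x)$ (for each $x$) are normalized probability distributions on $\{0,1\}^n$, each given (as a function of its conditioning argument) by a program of length polynomial in $n$ that evaluates and samples it in time polynomial in $n$. Let $\varepsilon\ge 0$ and suppose $$\mathbb E[-\log P_1(X)]\le n+\varepsilon,\qquad \mathbb E[-\log P_2(f(X);X)]\le\varepsilon .$$ Then for every constant $c$ there exists $N$ such that for all $n>N$ there is at least one $x\in\{0,1\}^n$ with $$P_1(x)\,P_2(f(x);x)\;>\;n^{c}\,2^{-2\varepsilon}\,P_2(f(x))\,P_1(x;f(x)).$$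
   Context: Logarithms are base 2. A polynomial-time computable permutation family $f_n:\{0,1\}^n\to\{0,1\}^n$ is one-way against non-uniform PPT inverters if for every probabilistic polynomial-time algorithm $A$ with advice strings of length $\mathrm{poly}(n)$, $\Pr_{x\sim U_n}[A(f(x))=x]$ is negligible in $n$ (smaller than $n^{-c}$ for every $c>0$ and all large $n$). "Sampling" a distribution means producing, from uniformly random bits, an output distributed exactly according to it. *)

theory Defs
  imports Complex_Main
begin

definition bits :: "nat \<Rightarrow> bool list set" where
  "bits n = {xs. length xs = n}"

text \<open>Wires 0..<length(input) carry the data input, the next c_rand wires carry
independent uniform random bits, and each gate appends one new wire.
Non-uniform PPT algorithms with polynomial advice, and programs of polynomial
length running in polynomial time, are modelled (as is standard, up to polynomial
equivalence) by families of randomized circuits of polynomial size.\<close>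

datatype gate = GAnd nat nat | GOr nat nat | GNot nat

record circuit =
  c_gates :: "gate list"
  c_rand  :: nat
  c_out   :: "nat list"

definition wire_val :: "bool list \<Rightarrow> nat \<Rightarrow> bool" where
  "wire_val ws i = (if i < length ws then ws ! i else False)"

fun gate_val :: "bool list \<Rightarrow> gate \<Rightarrow> bool" where
  "gate_val ws (GAnd i j) = (wire_val ws i \<and> wire_val ws j)"
| "gate_val ws (GOr i j) = (wire_val ws i \<or> wire_val ws j)"
| "gate_val ws (GNot i) = (\<not> wire_val ws i)"

fun eval_gates :: "bool list \<Rightarrow> gate list \<Rightarrow> bool list" where
  "eval_gates ws [] = ws"
| "eval_gates ws (g # gs) = eval_gates (ws @ [gate_val ws g]) gs"

definition run :: "circuit \<Rightarrow> bool list \<Rightarrow> bool list \<Rightarrow> bool list" where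
  "run C inp r = map (wire_val (eval_gates (inp @ r) (c_gates C))) (c_out C)"

definition csize :: "circuit \<Rightarrow> nat" where
  "csize C = length (c_gates C) + c_rand C + length (c_out C)"

definition out_prob :: "circuit \<Rightarrow> bool list \<Rightarrow> bool list \<Rightarrow> real" where
  "out_prob C inp z =
     real (card {r \<in> bits (c_rand C). run C inp r = z}) / 2 ^ c_rand C"

definition poly_bounded :: "(nat \<Rightarrow> nat) \<Rightarrow> bool" where
  "poly_bounded s \<longleftrightarrow> (\<exists>k::nat. \<forall>n. s n \<le> (n + 2) ^ k)"

definition poly_family :: "(nat \<Rightarrow> circuit) \<Rightarrow> bool" where
  "poly_family C \<longleftrightarrow> poly_bounded (\<lambda>n. csize (C n))"

definition negligible :: "(nat \<Rightarrow> real) \<Rightarrow> bool" where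
  "negligible e \<longleftrightarrow> (\<forall>c::real. c > 0 \<longrightarrow>
      (\<exists>N. \<forall>n>N. \<bar>e n\<bar> < real n powr (- c)))"

definition invert_prob ::
  "(nat \<Rightarrow> circuit) \<Rightarrow> (nat \<Rightarrow> bool list \<Rightarrow> bool list) \<Rightarrow> nat \<Rightarrow> real" where
  "invert_prob A f n = (\<Sum>x\<in>bits n. out_prob (A n) (f n x) x) / 2 ^ n"

definition one_way_perm :: "(nat \<Rightarrow> bool list \<Rightarrow> bool list) \<Rightarrow> bool" where
  "one_way_perm f \<longleftrightarrow>
     (\<forall>n. bij_betw (f n) (bits n) (bits n)) \<and>
     (\<exists>F. poly_family F \<and> (\<forall>n. c_rand (F n) = 0) \<and>
          (\<forall>n. \<forall>x\<in>bits n. run (F n) x [] = f n x)) \<and>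
     (\<forall>A. poly_family A \<longrightarrow> negligible (invert_prob A f))"

text \<open>P n cond z: probability of z \<in> {0,1}^n given the conditioning argument
cond \<in> {0,1}^(k n) (k n = 0 for an unconditional distribution).\<close>

definition is_cond_distr :: "(nat \<Rightarrow> nat) \<Rightarrow> (nat \<Rightarrow> bool list \<Rightarrow> bool list \<Rightarrow> real) \<Rightarrow> bool" where
  "is_cond_distr k P \<longleftrightarrow> (\<forall>n. \<forall>cond\<in>bits (k n).
      (\<forall>z\<in>bits n. P n cond z \<ge> 0) \<and> (\<Sum>z\<in>bits n. P n cond z) = 1)"

definition samples :: "(nat \<Rightarrow> nat) \<Rightarrow> (nat \<Rightarrow> circuit) \<Rightarrow> (nat \<Rightarrow> bool list \<Rightarrow> bool list \<Rightarrow> real) \<Rightarrow> bool" where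
  "samples k C P \<longleftrightarrow> (\<forall>n. \<forall>cond\<in>bits (k n). \<forall>z\<in>bits n. out_prob (C n) cond z = P n cond z)"

definition bin_val :: "bool list \<Rightarrow> nat" where
  "bin_val bs = foldl (\<lambda>a b. 2 * a + (if b then 1 else 0)) 0 bs"

definition evaluates :: "(nat \<Rightarrow> nat) \<Rightarrow> (nat \<Rightarrow> circuit) \<Rightarrow> (nat \<Rightarrow> bool list \<Rightarrow> bool list \<Rightarrow> real) \<Rightarrow> bool" where
  "evaluates k E P \<longleftrightarrow> (\<forall>n. c_rand (E n) = 0 \<and>
     (\<forall>cond\<in>bits (k n). \<forall>z\<in>bits n.
        P n cond z = real (bin_val (run (E n) (cond @ z) [])) / 2 ^ (length (c_out (E n)) - 1)))"

definition efficient_distr :: "(nat \<Rightarrow> nat) \<Rightarrow> (nat \<Rightarrow> bool list \<Rightarrow> bool list \<Rightarrow> real) \<Rightarrow> bool" where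
  "efficient_distr k P \<longleftrightarrow> is_cond_distr k P \<and>
     (\<exists>C. poly_family C \<and> samples k C P) \<and>
     (\<exists>E. poly_family E \<and> evaluates k E P)"

end

theory Submission
  imports Defs "HOL-Analysis.Convex"
begin

text \<open>Suppose the inequality fails for every x, i.e. P1(x) P2(f x; x) \<le> n^c 2^(-2\<epsilon>) P2(f x) P1(x; f x).
Averaging log2 over uniform x, the left side is at least -(n + \<epsilon>) - \<epsilon> by hypothesis, while the mean
of log2 P2(f x) is at most -n because f is a bijection and P2 is a distribution (Jensen). Hence the
mean of log2 P1(x; f x) is at least -c log2 n, and by Jensen again the mean of P1(x; f x) is at
least n^(-c). But that mean is the probability that the sampler of P1(\<cdot>; y), run on y = f x,
returns x: a non-negligible inverter for f. Neither \<epsilon> \<ge> 0 nor the efficiency of P1, P2 and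
P2(\<cdot>; x) is needed.\<close>

lemma finite_bits: "finite (bits n)"
  unfolding bits_def using finite_lists_length_eq[of "UNIV :: bool set" n] by simp

lemma card_bits: "card (bits n) = 2 ^ n"
  unfolding bits_def using card_lists_length_eq[of "UNIV :: bool set" n] by simp

lemma mean_log_le_log_mean:
  fixes a :: "'a \<Rightarrow> real"
  assumes "b > 1" "finite S" "S \<noteq> {}" "\<And>i. i \<in> S \<Longrightarrow> a i > 0"
  shows "(\<Sum>i\<in>S. log b (a i)) / card S \<le> log b ((\<Sum>i\<in>S. a i) / card S)"
proof -
  have card: "real (card S) > 0" using assms(2,3) by (simp add: card_gt_0_iff)
  have "(\<Sum>i\<in>S. log b (a i) / card S) \<le> log b (\<Sum>i\<in>S. a i / card S)"
    using concave_on_sum[OF assms(2,3) log_concave[OF assms(1)], of "\<lambda>_. 1 / card S" a]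
      assms card by auto
  then show ?thesis by (simp add: sum_divide_distrib)
qed

lemma mean_log_distr_le:
  fixes p :: "'a \<Rightarrow> real"
  assumes "b > 1" "finite S" "S \<noteq> {}" "\<And>y. y \<in> S \<Longrightarrow> p y > 0" "(\<Sum>y\<in>S. p y) = 1"
  shows "(\<Sum>y\<in>S. log b (p y)) / card S \<le> - log b (card S)"
proof -
  have "real (card S) > 0" using assms(2,3) by (simp add: card_gt_0_iff)
  then show ?thesis
    using mean_log_le_log_mean[of b S p, OF assms(1-4)] assms(1,5) by (simp add: log_divide)
qed

lemma log_le_if_dominated:
  fixes a b c d R e :: real
  assumes "a > 0" "b > 0" "c \<ge> 0" "d \<ge> 0" "R > 0"
    and le: "a * b \<le> R * 2 powr (- 2 * e) * c * d"
  shows "c > 0" "d > 0" "log 2 a + log 2 b \<le> log 2 R - 2 * e + log 2 c + log 2 d"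
proof -
  have "0 < a * b" using assms by simp
  also have "\<dots> \<le> R * 2 powr (- 2 * e) * (c * d)"
    using le by (simp add: mult.assoc)
  finally have "0 < R * 2 powr (- 2 * e) * (c * d)" .
  moreover have "0 < R * 2 powr (- 2 * e)" using assms by simp
  ultimately have "c * d > 0" by (rule zero_less_mult_pos)
  then show "c > 0" "d > 0" using assms by (simp_all add: zero_less_mult_iff)
  have "log 2 (a * b) \<le> log 2 (R * 2 powr (- 2 * e) * c * d)"
    using assms by (intro log_mono) simp_all
  then show "log 2 a + log 2 b \<le> log 2 R - 2 * e + log 2 c + log 2 d"
    using assms \<open>c > 0\<close> \<open>d > 0\<close> by (simp add: log_mult)
qed

lemma mean_backward_ge_if_dominated:
  fixes g :: "'a \<Rightarrow> 'a" and pa pb :: "'a \<Rightarrow> real" and qa qb :: "'a \<Rightarrow> 'a \<Rightarrow> real"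
  assumes S: "finite S" "S \<noteq> {}" and g: "bij_betw g S S"
    and pa_pos: "\<And>x. x \<in> S \<Longrightarrow> pa x > 0"
    and qb_pos: "\<And>x. x \<in> S \<Longrightarrow> qb x (g x) > 0"
    and entropy_pa: "(\<Sum>x\<in>S. - log 2 (pa x)) / card S \<le> log 2 (card S) + e"
    and entropy_qb: "(\<Sum>x\<in>S. - log 2 (qb x (g x))) / card S \<le> e"
    and pb_nonneg: "\<And>y. y \<in> S \<Longrightarrow> pb y \<ge> 0" and pb_sum: "(\<Sum>y\<in>S. pb y) = 1"
    and qa_nonneg: "\<And>x y. x \<in> S \<Longrightarrow> y \<in> S \<Longrightarrow> qa y x \<ge> 0"
    and R: "R > 0"
    and dominated: "\<And>x. x \<in> S \<Longrightarrow>
      pa x * qb x (g x) \<le> R * 2 powr (- 2 * e) * pb (g x) * qa (g x) x"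
  shows "1 / R \<le> (\<Sum>x\<in>S. qa (g x) x) / card S"
proof -
  define K where "K = real (card S)"
  have K: "K > 0" using S by (simp add: K_def card_gt_0_iff)
  have gS: "\<And>x. x \<in> S \<Longrightarrow> g x \<in> S" using g by (meson bij_betwE)
  have backward_pos: "pb (g x) > 0" "qa (g x) x > 0"
    and pointwise: "log 2 (pa x) + log 2 (qb x (g x))
      \<le> log 2 R - 2 * e + log 2 (pb (g x)) + log 2 (qa (g x) x)" if x: "x \<in> S" for x
    using log_le_if_dominated[OF pa_pos[OF x] qb_pos[OF x] pb_nonneg[OF gS[OF x]]
        qa_nonneg[OF x gS[OF x]] R dominated[OF x]] .
  have pb_pos: "pb y > 0" if "y \<in> S" for y
    using backward_pos g that by (metis bij_betw_iff_bijections)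
  have "(\<Sum>x\<in>S. log 2 (pb (g x))) = (\<Sum>y\<in>S. log 2 (pb y))"
    using sum.reindex_bij_betw[OF g] .
  then have entropy_pb: "(\<Sum>x\<in>S. log 2 (pb (g x))) / K \<le> - log 2 K"
    using mean_log_distr_le[of 2 S pb] S pb_pos pb_sum by (simp add: K_def)
  have "(\<Sum>x\<in>S. log 2 (pa x) + log 2 (qb x (g x)))
      \<le> (\<Sum>x\<in>S. log 2 R - 2 * e + log 2 (pb (g x)) + log 2 (qa (g x) x))"
    using pointwise by (rule sum_mono)
  then have "(\<Sum>x\<in>S. log 2 (pa x)) + (\<Sum>x\<in>S. log 2 (qb x (g x)))
      \<le> K * (log 2 R - 2 * e) + (\<Sum>x\<in>S. log 2 (pb (g x))) + (\<Sum>x\<in>S. log 2 (qa (g x) x))"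
    by (simp add: sum.distrib K_def)
  then have "((\<Sum>x\<in>S. log 2 (pa x)) + (\<Sum>x\<in>S. log 2 (qb x (g x)))) / K
      \<le> (K * (log 2 R - 2 * e) + (\<Sum>x\<in>S. log 2 (pb (g x))) + (\<Sum>x\<in>S. log 2 (qa (g x) x))) / K"
    using K by (intro divide_right_mono) simp_all
  then have "(\<Sum>x\<in>S. log 2 (pa x)) / K + (\<Sum>x\<in>S. log 2 (qb x (g x))) / K
      \<le> log 2 R - 2 * e + (\<Sum>x\<in>S. log 2 (pb (g x))) / K + (\<Sum>x\<in>S. log 2 (qa (g x) x)) / K"
    using K by (simp add: add_divide_distrib)
  then have "log 2 (1 / R) \<le> (\<Sum>x\<in>S. log 2 (qa (g x) x)) / K"
    using entropy_pa entropy_qb entropy_pb R by (simp add: sum_negf K_def log_divide)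
  also have "\<dots> \<le> log 2 ((\<Sum>x\<in>S. qa (g x) x) / K)"
    using mean_log_le_log_mean[of 2 S "\<lambda>x. qa (g x) x"] S backward_pos by (simp add: K_def)
  finally show ?thesis
    using R K S backward_pos by (simp add: K_def sum_pos)
qed

lemma negligible_eventually_less_powr:
  assumes "negligible e"
  shows "\<exists>N. \<forall>n>N. e n < real n powr c"
proof -
  obtain N where N: "\<forall>n>N. \<bar>e n\<bar> < real n powr (- (\<bar>c\<bar> + 1))"
    using assms unfolding negligible_def by (metis add_nonneg_pos abs_ge_zero zero_less_one)
  have "e n < real n powr c" if "n > N" for n
  proof -
    have "real n powr (- (\<bar>c\<bar> + 1)) \<le> real n powr c"
      using that by (intro powr_mono) auto
    then show ?thesis using N that by fastforce
  qed
  then show ?thesis by blast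
qed

lemma invert_prob_sampler:
  assumes "samples (\<lambda>n. n) C Q" and "\<And>x. x \<in> bits n \<Longrightarrow> f n x \<in> bits n"
  shows "invert_prob C f n = (\<Sum>x\<in>bits n. Q n (f n x) x) / 2 ^ n"
  using assms unfolding invert_prob_def samples_def by (auto intro!: sum.cong)

theorem mainTheorem9:
  fixes f :: "nat \<Rightarrow> bool list \<Rightarrow> bool list"
    and P1 P2 :: "nat \<Rightarrow> bool list \<Rightarrow> real"
    and P1c :: "nat \<Rightarrow> bool list \<Rightarrow> bool list \<Rightarrow> real"
    and P2c :: "nat \<Rightarrow> bool list \<Rightarrow> bool list \<Rightarrow> real"
    and \<epsilon> :: "nat \<Rightarrow> real"
  assumes owp: "one_way_perm f"
    and effP1: "efficient_distr (\<lambda>_. 0) (\<lambda>n _ x. P1 n x)"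
    and effP2: "efficient_distr (\<lambda>_. 0) (\<lambda>n _ y. P2 n y)"
    and effP1c: "efficient_distr (\<lambda>n. n) P1c"
    and effP2c: "efficient_distr (\<lambda>n. n) P2c"
    and eps_nonneg: "\<And>n. \<epsilon> n \<ge> 0"
    and H1: "\<And>n. (\<forall>x\<in>bits n. P1 n x > 0) \<and>
               (\<Sum>x\<in>bits n. - log 2 (P1 n x)) / 2 ^ n \<le> real n + \<epsilon> n"
    and H2: "\<And>n. (\<forall>x\<in>bits n. P2c n x (f n x) > 0) \<and>
               (\<Sum>x\<in>bits n. - log 2 (P2c n x (f n x))) / 2 ^ n \<le> \<epsilon> n"
  shows "\<forall>c::real. \<exists>N::nat. \<forall>n>N. \<exists>x\<in>bits n.
           P1 n x * P2c n x (f n x) >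
           real n powr c * 2 powr (- 2 * \<epsilon> n) * P2 n (f n x) * P1c n (f n x) x"
proof (intro allI)
  fix c :: real
  obtain C where "poly_family C" and sampler: "samples (\<lambda>n. n) C P1c"
    using effP1c unfolding efficient_distr_def by blast
  then have bij: "\<And>n. bij_betw (f n) (bits n) (bits n)" and "negligible (invert_prob C f)"
    using owp unfolding one_way_perm_def by blast+
  then obtain N where N: "\<forall>n>N. invert_prob C f n < real n powr (- c)"
    using negligible_eventually_less_powr by blast
  have "\<exists>x\<in>bits n. P1 n x * P2c n x (f n x) >
      real n powr c * 2 powr (- 2 * \<epsilon> n) * P2 n (f n x) * P1c n (f n x) x" if "n > N" for n
  proof (rule ccontr)
    assume "\<not> ?thesis"
    then have dominated: "\<And>x. x \<in> bits n \<Longrightarrow> P1 n x * P2c n x (f n x) \<le>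
        real n powr c * 2 powr (- 2 * \<epsilon> n) * P2 n (f n x) * P1c n (f n x) x"
      by (simp add: not_less)
    have "[] \<in> bits 0" by (simp add: bits_def)
    then have "\<forall>y\<in>bits n. P2 n y \<ge> 0" "(\<Sum>y\<in>bits n. P2 n y) = 1"
      and "\<forall>x\<in>bits n. \<forall>y\<in>bits n. P1c n y x \<ge> 0"
      using effP2 effP1c unfolding efficient_distr_def is_cond_distr_def by auto
    then have "1 / real n powr c \<le> (\<Sum>x\<in>bits n. P1c n (f n x) x) / card (bits n)"
      using H1[of n] H2[of n] that bij[of n] dominated
      by (intro mean_backward_ge_if_dominated[where pa = "P1 n" and qb = "P2c n" and e = "\<epsilon> n"])
        (auto simp: finite_bits card_bits)
    then have "real n powr (- c) \<le> invert_prob C f n"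
      using invert_prob_sampler[OF sampler] bij[of n]
      by (simp add: card_bits powr_minus_divide bij_betwE)
    then show False using N that by fastforce
  qed
  then show "\<exists>N. \<forall>n>N. \<exists>x\<in>bits n. P1 n x * P2c n x (f n x) >
      real n powr c * 2 powr (- 2 * \<epsilon> n) * P2 n (f n x) * P1c n (f n x) x"
    by blast
qed

end
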